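(* Let $H$ be a dephased complex Hadamard matrix of order $6$ such that some row other than the first, or some column other than the first, consists entirely of cube roots of unity. Then either $H$ is equivalent to the matrix $S_6^{(0)}$, or $H$ belongs to the family $K_6^{(3)}$.
   Context: A complex Hadamard matrix of order $n$ is an $n\times n$ complex matrix with all entries of modulus $1$ satisfying $HH^\ast=nI_n$; it is dephased if its first row and column consist of $1$'s, and its core is its lower right $(n-1)\times(n-1)$ submatrix. $H$ and $K$ are equivalent if $K=P_1D_1HD_2P_2$ with $P_i$ permutation matrices and $D_i$ diagonal unitary matrices. A $6\times 6$ complex Hadamard matrix belongs to the family $K_6^{(3)}$ if it is equivalent to a dephased complex Hadamard matrix whose core contains an entry $-1$. With $\omega=e^{2\pi i/3}$, \[S_6^{(0)}=\begin{bmatrix}1&1&1&1&1&1\\1&1&\omega&\omega^2&\omega^2&\omega\\1&\omega&1&\omega&\omega^2&\omega^2\\1&\omega^2&\omega&1&\omega&\omega^2\\1&\omega^2&\omega^2&\omega&1&\omega\\1&\omega&\omega^2&\omega^2&\omega&1\end{bmatrix}.\] *)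

theory Defs
  imports "HOL-Analysis.Analysis"
begin

text \<open>Square complex matrices of order n are modelled as complex^'n^'n; order 6 uses the
numeral type 6. The first row/column is index 1 of type 6.\<close>

definition conj_transpose :: "complex^'n^'n \<Rightarrow> complex^'n^'n" where
  "conj_transpose A = (\<chi> i j. cnj (A $ j $ i))"

definition complex_hadamard :: "complex^'n^'n \<Rightarrow> bool" where
  "complex_hadamard H \<longleftrightarrow> (\<forall>i j. cmod (H $ i $ j) = 1) \<and>
     H ** conj_transpose H = of_nat CARD('n) *\<^sub>R mat 1"

definition dephased :: "complex^('n::{finite,one})^('n::{finite,one}) \<Rightarrow> bool" where
  "dephased H \<longleftrightarrow> (\<forall>j. H $ 1 $ j = 1) \<and> (\<forall>i. H $ i $ 1 = 1)"

definition perm_matrix :: "('n::finite \<Rightarrow> 'n) \<Rightarrow> complex^'n^'n" where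
  "perm_matrix p = (\<chi> i j. if p i = j then 1 else 0)"

definition diag_matrix :: "('n::finite \<Rightarrow> complex) \<Rightarrow> complex^'n^'n" where
  "diag_matrix d = (\<chi> i j. if i = j then d i else 0)"

definition hadamard_equiv :: "complex^'n::finite^'n \<Rightarrow> complex^'n^'n \<Rightarrow> bool" where
  "hadamard_equiv H K \<longleftrightarrow> (\<exists>p1 p2 d1 d2. p1 permutes UNIV \<and> p2 permutes UNIV \<and>
     (\<forall>i. cmod (d1 i) = 1) \<and> (\<forall>i. cmod (d2 i) = 1) \<and>
     K = perm_matrix p1 ** diag_matrix d1 ** H ** diag_matrix d2 ** perm_matrix p2)"

text \<open>Family K_6^(3): equivalent to a dephased complex Hadamard matrix whose core
(the lower-right 5x5 submatrix) contains an entry -1.\<close>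
definition in_K6_3 :: "complex^6^6 \<Rightarrow> bool" where
  "in_K6_3 H \<longleftrightarrow> (\<exists>K. complex_hadamard K \<and> dephased K \<and> hadamard_equiv H K \<and>
      (\<exists>i j. i \<noteq> 1 \<and> j \<noteq> 1 \<and> K $ i $ j = -1))"

definition omega3 :: complex where
  "omega3 = cis (2 * pi / 3)"

definition S6_0_list :: "nat list list" where
  "S6_0_list = [[0,0,0,0,0,0],[0,0,1,2,2,1],[0,1,0,1,2,2],[0,2,1,0,1,2],[0,2,2,1,0,1],[0,1,2,2,1,0]]"

text \<open>Entry (i,j) (0-based) of S_6^(0) is omega^(S6_0_list!i!j). Index k::6 corresponds
to the unique row number n < 6 with n + 1 = k in type 6, so index 1 is the first row.\<close>
definition idx6 :: "6 \<Rightarrow> nat" where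
  "idx6 k = (THE n. n < 6 \<and> (of_nat n + 1 :: 6) = k)"

definition S6_0 :: "complex^6^6" where
  "S6_0 = (\<chi> i j. omega3 ^ (S6_0_list ! idx6 i ! idx6 j))"

end

(*
  Since the conclusion is invariant under transposition, it suffices to treat a row.
  Orthogonality to the all-ones row forces that row to contain each of 1, w, w^2 exactly
  twice (w = omega3), so permuting rows and columns gives the normal form with second row
  (1, 1, w, w, w^2, w^2). If its second column contains -1 the matrix is in K_6^(3).
  Otherwise orthogonality to the first two rows pins down every further row up to two
  swaps (two unimodular numbers are determined by a nonzero sum), and the sums of the
  columns 2 and 3 force the second column to consist of primitive cube roots of unity.
  Then every further row is one of eight explicit candidate rows; orthogonality among the
  candidates splits them into two cliques of four, so the matrix is a row permutation of one
  of two canonical matrices, each of which is a column permutation of S_6^(0).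
*)

theory Submission
  imports Defs "HOL-Combinatorics.List_Permutation"
begin

lemma UNIV_6: "(UNIV::6 set) = {0,1,2,3,4,5}"
proof -
  have "card {0,1,2,3,4,5::6} = 6" by simp
  then show ?thesis by (intro card_subset_eq[symmetric]) auto
qed

lemma all_6: "(\<forall>x::6. P x) \<longleftrightarrow> P 0 \<and> P 1 \<and> P 2 \<and> P 3 \<and> P 4 \<and> P 5"
proof -
  have "(\<forall>x::6. P x) \<longleftrightarrow> (\<forall>x\<in>UNIV. P x)" by simp
  also have "\<dots> \<longleftrightarrow> (\<forall>x\<in>{0,1,2,3,4,5}. P x)" by (simp only: UNIV_6)
  finally show ?thesis by simp
qed

lemma sum_6: "(\<Sum>x::6\<in>UNIV. f x) = f 0 + f 1 + f 2 + f 3 + f 4 + f 5"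
proof -
  have "(\<Sum>x::6\<in>UNIV. f x) = (\<Sum>x\<in>{0,1,2,3,4,5}. f x)" by (simp only: UNIV_6)
  also have "\<dots> = f 0 + f 1 + f 2 + f 3 + f 4 + f 5" by (simp add: add.assoc)
  finally show ?thesis .
qed

text \<open>\<^const>\<open>idx6\<close> numbers the indices \<open>1, 2, 3, 4, 5, 0\<close> by \<open>0, \<dots>, 5\<close>; \<open>ind6\<close> is its inverse.\<close>

definition ind6 :: "nat \<Rightarrow> 6" where "ind6 n = of_nat n + 1"

lemma idx6_ind6: assumes "n < 6" shows "idx6 (ind6 n) = n"
  unfolding idx6_def ind6_def
proof (rule the_equality)
  fix m assume m: "m < 6 \<and> (of_nat m + 1 :: 6) = of_nat n + 1"
  have "m = 0 \<or> m = 1 \<or> m = 2 \<or> m = 3 \<or> m = 4 \<or> m = 5" using m by linarith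
  moreover have "n = 0 \<or> n = 1 \<or> n = 2 \<or> n = 3 \<or> n = 4 \<or> n = 5" using assms by linarith
  ultimately show "m = n" using m by (elim disjE) simp_all
qed (use assms in simp)

lemma idx6_values: "idx6 1 = 0" "idx6 2 = 1" "idx6 3 = 2" "idx6 4 = 3" "idx6 5 = 4" "idx6 0 = 5"
proof -
  have six: "(6::6) = 0" by simp
  show "idx6 1 = 0" "idx6 2 = 1" "idx6 3 = 2" "idx6 4 = 3" "idx6 5 = 4" "idx6 0 = 5"
    using idx6_ind6[of 0] idx6_ind6[of 1] idx6_ind6[of 2] idx6_ind6[of 3] idx6_ind6[of 4]
      idx6_ind6[of 5] by (simp_all add: ind6_def six)
qed

lemma ind6_idx6: "ind6 (idx6 k) = k" and idx6_less: "idx6 k < 6"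
  using all_6[of "\<lambda>k. ind6 (idx6 k) = k \<and> idx6 k < 6"] by (auto simp: idx6_values ind6_def)

lemma bij_idx6: "bij_betw idx6 UNIV {..<6}"
proof (rule bij_betw_byWitness[of _ ind6])
  show "idx6 ` UNIV \<subseteq> {..<6}" using idx6_less by auto
  show "ind6 ` {..<6} \<subseteq> UNIV" by simp
qed (simp_all add: ind6_idx6 idx6_ind6)

lemma bij_lift6: assumes "bij_betw f {..<6} {..<6}" shows "bij (\<lambda>i. ind6 (f (idx6 i)))"
proof -
  have "bij_betw ind6 {..<6} UNIV"
    by (rule bij_betw_byWitness[of _ idx6]) (use idx6_less in \<open>auto simp: ind6_idx6 idx6_ind6\<close>)
  then show ?thesis
    using bij_betw_trans[OF bij_betw_trans[OF bij_idx6 assms]] by (simp add: comp_def)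
qed

lemma sum_idx6: "(\<Sum>j\<in>UNIV. g (idx6 j)) = (\<Sum>p<6. g p)"
  using sum.reindex_bij_betw[OF bij_idx6] by blast

section \<open>Monomial equivalence\<close>

definition monomial_equiv :: "complex^'n::finite^'n \<Rightarrow> complex^'n^'n \<Rightarrow> bool" where
  "monomial_equiv H K \<longleftrightarrow> (\<exists>\<sigma> \<tau> a b. bij \<sigma> \<and> bij \<tau> \<and> (\<forall>i. cmod (a i) = 1) \<and>
     (\<forall>j. cmod (b j) = 1) \<and> (\<forall>i j. K $ i $ j = a i * H $ (\<sigma> i) $ (\<tau> j) * b j))"

lemma perm_diag_mult_left:
  "(perm_matrix p ** diag_matrix d ** A) $ i $ j = d (p i) * A $ (p i) $ j"
  by (simp add: matrix_mul_assoc[symmetric] matrix_matrix_mult_def perm_matrix_def diag_matrix_def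
      if_distrib[of "\<lambda>x. x * y" for y] cong: if_cong)

lemma diag_mult_right: "(A ** diag_matrix d) $ i $ j = A $ i $ j * d j"
  by (simp add: matrix_matrix_mult_def diag_matrix_def if_distrib cong: if_cong)

lemma perm_mult_right:
  assumes "bij p" shows "(A ** perm_matrix p) $ i $ j = A $ i $ (inv p j)"
proof -
  have "\<And>k. (p k = j) = (k = inv p j)" using assms by (metis bij_inv_eq_iff)
  then show ?thesis by (simp add: matrix_matrix_mult_def perm_matrix_def if_distrib cong: if_cong)
qed

lemma monomial_equiv_imp_hadamard_equiv:
  assumes "monomial_equiv H K" shows "hadamard_equiv H K"
proof -
  obtain \<sigma> \<tau> a b where \<sigma>: "bij \<sigma>" and \<tau>: "bij \<tau>" and a: "\<forall>i. cmod (a i) = 1"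
    and b: "\<forall>j. cmod (b j) = 1" and K: "\<forall>i j. K $ i $ j = a i * H $ (\<sigma> i) $ (\<tau> j) * b j"
    using assms unfolding monomial_equiv_def by blast
  have \<tau>': "bij (inv \<tau>)" using \<tau> by (simp add: bij_imp_bij_inv)
  have "K = perm_matrix \<sigma> ** diag_matrix (a \<circ> inv \<sigma>) ** H ** diag_matrix (b \<circ> inv \<tau>)
            ** perm_matrix (inv \<tau>)"
    using \<sigma> \<tau> K by (simp add: vec_eq_iff perm_mult_right[OF \<tau>'] inv_inv_eq diag_mult_right
        perm_diag_mult_left bij_is_inj bij_is_surj surj_f_inv_f)
  moreover have "\<sigma> permutes UNIV" "inv \<tau> permutes UNIV" using \<sigma> \<tau>' by (auto intro: bij_imp_permutes)
  ultimately show ?thesis using a b unfolding hadamard_equiv_def by (metis comp_apply)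
qed

lemma monomial_equiv_refl: "monomial_equiv H H"
  unfolding monomial_equiv_def
  by (rule exI[of _ id], rule exI[of _ id], rule exI[of _ "\<lambda>_. 1"], rule exI[of _ "\<lambda>_. 1"]) simp

lemma monomial_equiv_trans:
  assumes "monomial_equiv H K" "monomial_equiv K L" shows "monomial_equiv H L"
proof -
  obtain \<sigma> \<tau> a b where "bij \<sigma>" "bij \<tau>" "\<forall>i. cmod (a i) = 1" "\<forall>j. cmod (b j) = 1"
    and K: "\<forall>i j. K $ i $ j = a i * H $ (\<sigma> i) $ (\<tau> j) * b j"
    using assms(1) unfolding monomial_equiv_def by blast
  moreover obtain \<sigma>' \<tau>' a' b' where "bij \<sigma>'" "bij \<tau>'" "\<forall>i. cmod (a' i) = 1" "\<forall>j. cmod (b' j) = 1"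
    and L: "\<forall>i j. L $ i $ j = a' i * K $ (\<sigma>' i) $ (\<tau>' j) * b' j"
    using assms(2) unfolding monomial_equiv_def by blast
  ultimately show ?thesis unfolding monomial_equiv_def
    by (intro exI[of _ "\<sigma> \<circ> \<sigma>'"] exI[of _ "\<tau> \<circ> \<tau>'"] exI[of _ "\<lambda>i. a' i * a (\<sigma>' i)"]
        exI[of _ "\<lambda>j. b (\<tau>' j) * b' j"]) (auto simp: bij_comp norm_mult mult_ac)
qed

lemma monomial_equiv_transpose:
  assumes "monomial_equiv H K" shows "monomial_equiv (transpose H) (transpose K)"
  using assms unfolding monomial_equiv_def transpose_def by (force simp: mult_ac)

lemma monomial_equiv_permute:
  assumes "bij \<sigma>" "bij \<tau>" shows "monomial_equiv H (\<chi> i j. H $ (\<sigma> i) $ (\<tau> j))"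
  unfolding monomial_equiv_def using assms
  by (intro exI[of _ \<sigma>] exI[of _ \<tau>] exI[of _ "\<lambda>_. 1"] exI[of _ "\<lambda>_. 1"]) simp

section \<open>Orthogonality in complex Hadamard matrices\<close>

lemma hadamard_unimodular: "complex_hadamard H \<Longrightarrow> cmod (H $ i $ j) = 1"
  unfolding complex_hadamard_def by blast

lemma hadamard_rows_orth:
  assumes "complex_hadamard (H::complex^'n::finite^'n)"
  shows "(\<Sum>j\<in>UNIV. H $ a $ j * cnj (H $ b $ j)) = (if a = b then of_nat CARD('n) else 0)"
proof -
  have "(H ** conj_transpose H) $ a $ b = (of_nat CARD('n) *\<^sub>R mat 1 :: complex^'n^'n) $ a $ b"
    using assms unfolding complex_hadamard_def by simp
  then show ?thesis
    by (simp add: matrix_matrix_mult_def conj_transpose_def mat_def of_real_def[symmetric])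
qed

lemma hadamard_intro:
  assumes "\<And>i j. cmod ((H::complex^'n::finite^'n) $ i $ j) = 1"
    and "\<And>a b. (\<Sum>j\<in>UNIV. H $ a $ j * cnj (H $ b $ j)) = (if a = b then of_nat CARD('n) else 0)"
  shows "complex_hadamard H"
  unfolding complex_hadamard_def using assms
  by (simp add: vec_eq_iff matrix_matrix_mult_def conj_transpose_def mat_def of_real_def[symmetric])

text \<open>\<open>H H\<^sup>* = n I\<close> forces \<open>H\<^sup>* H = n I\<close>: the columns are orthogonal as well.\<close>

lemma hadamard_cols_orth:
  assumes "complex_hadamard (H::complex^'n::finite^'n)"
  shows "(\<Sum>k\<in>UNIV. H $ k $ a * cnj (H $ k $ b)) = (if a = b then of_nat CARD('n) else 0)"
proof -
  define B :: "complex^'n^'n" where "B = (\<chi> i j. cnj (H $ j $ i) / of_nat CARD('n))"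
  have "H ** B = mat 1"
    using hadamard_rows_orth[OF assms]
    by (simp add: vec_eq_iff matrix_matrix_mult_def B_def mat_def sum_divide_distrib[symmetric])
  then have "(B ** H) $ b $ a = mat 1 $ b $ a" using matrix_left_right_inverse by metis
  then have "(\<Sum>k\<in>UNIV. cnj (H $ k $ b) * H $ k $ a) / of_nat CARD('n) = (if a = b then 1 else 0)"
    by (simp add: matrix_matrix_mult_def B_def sum_divide_distrib mat_def eq_commute)
  then show ?thesis by (auto simp: mult.commute split: if_splits)
qed

lemma hadamard_transpose:
  assumes "complex_hadamard (H::complex^'n::finite^'n)" shows "complex_hadamard (transpose H)"
  by (rule hadamard_intro) (simp_all add: transpose_def hadamard_unimodular[OF assms]
      hadamard_cols_orth[OF assms])

lemma hadamard_permute: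
  fixes \<sigma> \<tau> :: "'n::finite \<Rightarrow> 'n"
  assumes H: "complex_hadamard (H::complex^'n::finite^'n)" and "bij \<sigma>" "bij \<tau>"
  shows "complex_hadamard (\<chi> i j. H $ (\<sigma> i) $ (\<tau> j))"
proof -
  have "(\<Sum>j\<in>UNIV. H $ (\<sigma> a) $ (\<tau> j) * cnj (H $ (\<sigma> b) $ (\<tau> j))) =
        (if a = b then of_nat CARD('n) else 0)" for a b
  proof -
    have "(\<Sum>j\<in>UNIV. H $ (\<sigma> a) $ (\<tau> j) * cnj (H $ (\<sigma> b) $ (\<tau> j))) =
          (\<Sum>j\<in>UNIV. H $ (\<sigma> a) $ j * cnj (H $ (\<sigma> b) $ j))"
      using sum.reindex_bij_betw[of \<tau> UNIV UNIV] \<open>bij \<tau>\<close> by simp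
    also have "\<dots> = (if a = b then of_nat CARD('n) else 0)"
      using hadamard_rows_orth[OF H] \<open>bij \<sigma>\<close> by (simp add: bij_is_inj inj_eq)
    finally show ?thesis .
  qed
  then show ?thesis by (intro hadamard_intro) (simp_all add: hadamard_unimodular[OF H])
qed

lemma dephased_transpose: "dephased H \<Longrightarrow> dephased (transpose H)"
  unfolding dephased_def transpose_def by simp

section \<open>Cube roots of unity\<close>

abbreviation \<omega> :: complex where "\<omega> \<equiv> omega3"

lemma omega_eq: "\<omega> = Complex (-1/2) (sqrt 3 / 2)"
proof -
  have "sin (2 * pi / 3) = sqrt 3 / 2" using sin_120' by (simp add: mult.commute)
  then show ?thesis unfolding omega3_def cis.ctr using cos_120 by simp
qed

lemma omega_sq_eq: "\<omega>^2 = Complex (-1/2) (- sqrt 3 / 2)"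
  unfolding power2_eq_square omega_eq by (simp add: complex_eq_iff)

lemma omega_cube: "\<omega>^3 = 1"
proof -
  have "\<omega>^3 = \<omega> * \<omega>^2" by (simp add: power3_eq_cube power2_eq_square)
  then show ?thesis unfolding omega_sq_eq by (simp add: omega_eq complex_eq_iff)
qed

lemma omega_sum: "1 + \<omega> + \<omega>^2 = 0"
  unfolding omega_sq_eq by (simp add: omega_eq complex_eq_iff)

lemma omega_neq: "\<omega> \<noteq> 1" "\<omega>^2 \<noteq> 1" "\<omega> \<noteq> \<omega>^2"
  unfolding omega_sq_eq by (simp_all add: omega_eq complex_eq_iff)

lemma cnj_omega: "cnj \<omega> = \<omega>^2" "cnj (\<omega>^2) = \<omega>"
  unfolding omega_sq_eq by (simp_all add: omega_eq complex_eq_iff)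

lemma cmod_omega: "cmod \<omega> = 1" "cmod (\<omega>^2) = 1"
  unfolding omega3_def by (simp_all add: norm_power)

lemma omega_mult: "\<omega> * \<omega> = \<omega>^2" "\<omega> * \<omega>^2 = 1" "\<omega>^2 * \<omega> = 1" "\<omega>^2 * \<omega>^2 = \<omega>" "\<omega>^4 = \<omega>"
  using omega_cube by (simp_all add: power2_eq_square power3_eq_cube power4_eq_xxxx mult.assoc)

lemma omega_pow_mod: "\<omega>^n = \<omega>^(n mod 3)"
proof -
  have "\<omega>^n = \<omega>^(3 * (n div 3) + n mod 3)" by simp
  also have "\<dots> = (\<omega>^3)^(n div 3) * \<omega>^(n mod 3)" by (simp only: power_add power_mult)
  finally show ?thesis using omega_cube by simp
qed

lemma omega_pow_inj: assumes "a < 3" "b < 3" "\<omega>^a = \<omega>^b" shows "a = b"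
  using assms omega_neq by (auto simp: less_Suc_eq numeral_3_eq_3 eval_nat_numeral)

lemma cube_root_cases: assumes "(z::complex)^3 = 1" shows "z = 1 \<or> z = \<omega> \<or> z = \<omega>^2"
proof -
  have "(z - 1) * (z - \<omega>) * (z - \<omega>^2) =
        z^3 - (1 + \<omega> + \<omega>^2) * z^2 + \<omega> * (1 + \<omega> + \<omega>^2) * z - \<omega>^3"
    by (simp add: algebra_simps power2_eq_square power3_eq_cube)
  also have "\<dots> = 0" using assms omega_cube omega_sum by simp
  finally show ?thesis by auto
qed

lemma omega_combination_zero:
  assumes "of_nat a + of_nat b * \<omega> + of_nat c * \<omega>^2 = (0::complex)" shows "a = b \<and> b = c"
proof -
  have "real a - real b / 2 - real c / 2 = 0" "(real b - real c) * (sqrt 3 / 2) = 0"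
    using arg_cong[OF assms, of Re] arg_cong[OF assms, of Im]
    unfolding omega_sq_eq by (simp_all add: omega_eq algebra_simps)
  then show ?thesis by simp
qed

lemma cube_roots_sum_zero:
  fixes f :: "'a \<Rightarrow> complex"
  assumes "finite A" "\<forall>x\<in>A. f x ^ 3 = 1" "(\<Sum>x\<in>A. f x) = 0" "z ^ 3 = 1"
  shows "3 * card {x\<in>A. f x = z} = card A"
proof -
  define n where "n w = card {x\<in>A. f x = w}" for w
  have roots: "\<forall>x\<in>A. f x = 1 \<or> f x = \<omega> \<or> f x = \<omega>^2" using assms(2) cube_root_cases by blast
  have split: "(\<Sum>x\<in>A. g (f x)) = of_nat (n 1) * g 1 + of_nat (n \<omega>) * g \<omega> + of_nat (n (\<omega>^2)) * g (\<omega>^2)"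
    for g :: "complex \<Rightarrow> complex"
  proof -
    have "(\<Sum>x\<in>A. g (f x)) = (\<Sum>x\<in>A. (if f x = 1 then g 1 else 0) + (if f x = \<omega> then g \<omega> else 0)
                                + (if f x = \<omega>^2 then g (\<omega>^2) else 0))"
      using roots omega_neq by (intro sum.cong) auto
    then show ?thesis using assms(1) by (simp add: sum.distrib sum.If_cases n_def Int_def)
  qed
  have "n 1 = n \<omega> \<and> n \<omega> = n (\<omega>^2)"
    using split[of id] assms(3) by (intro omega_combination_zero) (simp add: mult.commute)
  moreover have "of_nat (card A) = (of_nat (n 1 + n \<omega> + n (\<omega>^2)) :: complex)"
    using split[of "\<lambda>_. 1"] by simp
  moreover have "z = 1 \<or> z = \<omega> \<or> z = \<omega>^2" using assms(4) cube_root_cases by blast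
  ultimately show ?thesis unfolding n_def of_nat_eq_iff by auto
qed

section \<open>Sums of unimodular numbers\<close>

lemma unimodular_cnj: "cmod (a::complex) = 1 \<Longrightarrow> cnj a * a = 1"
  by (metis complex_norm_square mult.commute of_real_1 power_one)

text \<open>Two unimodular numbers are determined, up to order, by their sum when it is nonzero:
  \<open>a b = (a + b) / cnj (a + b)\<close>, so both the sum and the product are known.\<close>

lemma unimodular_pair_eq:
  assumes "cmod a = 1" "cmod b = 1" "cmod c = 1" "cmod d = 1" "a + b = c + d" "a + b \<noteq> 0"
  shows "(a = c \<and> b = d) \<or> (a = d \<and> b = c)"
proof -
  have prod: "x * y * cnj (x + y) = x + y" if "cmod x = 1" "cmod y = 1" for x y :: complex
    using unimodular_cnj[OF that(1)] unimodular_cnj[OF that(2)] by (simp add: algebra_simps)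
  have "a * b * cnj (a + b) = c * d * cnj (a + b)"
    using prod[OF assms(1,2)] prod[OF assms(3,4)] assms(5) by simp
  moreover have "cnj (a + b) \<noteq> 0" using assms(6) complex_cnj_zero_iff by metis
  ultimately have "a * b = c * d" by simp
  then have "(c - a) * (c - b) = c * c - c * (a + b) + a * b" by (simp add: algebra_simps)
  also have "\<dots> = 0" using \<open>a * b = c * d\<close> assms(5) by (simp add: algebra_simps)
  finally have "(c - a) * (c - b) = 0" .
  then show ?thesis using assms(5) by auto
qed

text \<open>Since \<open>\<omega> + \<omega>\<^sup>2 = -1\<close>, two unimodular numbers with sum \<open>-1\<close> are \<open>\<omega>\<close> and \<open>\<omega>\<^sup>2\<close>.\<close>

lemma unimodular_sum_minus_one:
  assumes "cmod u = 1" "cmod v = 1" "u + v = -1" shows "u = \<omega> \<or> u = \<omega>^2"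
proof -
  have "\<omega> + \<omega>^2 = -1" using omega_sum by (simp add: algebra_simps eq_neg_iff_add_eq_0)
  then show ?thesis
    using unimodular_pair_eq[OF assms(1,2) cmod_omega] assms(3) by auto
qed

lemma unimodular_pair_minus_one:
  assumes "card P = 2" "\<forall>i\<in>P. cmod (x i) = 1" "(\<Sum>i\<in>P. x i) = -1"
  shows "\<forall>i\<in>P. x i = \<omega> \<or> x i = \<omega>^2"
proof -
  obtain u v where P: "P = {u, v}" "u \<noteq> v" using assms(1) by (meson card_2_iff)
  then have uv: "cmod (x u) = 1" "cmod (x v) = 1" "x u + x v = -1" using assms(2,3) by auto
  then have "x u = \<omega> \<or> x u = \<omega>^2" "x v = \<omega> \<or> x v = \<omega>^2"
    using unimodular_sum_minus_one[of "x u" "x v"] unimodular_sum_minus_one[of "x v" "x u"]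
    by (simp_all add: add.commute)
  then show ?thesis using P(1) by simp
qed

text \<open>If four unimodular numbers sum to \<open>-2\<close> and replacing some of them by \<open>1\<close> yields
  the sum \<open>1\<close>, then exactly two were replaced, each pair sums to \<open>-1\<close>, and all four numbers
  are primitive cube roots of unity.\<close>

lemma unimodular_split:
  fixes x c :: "'i \<Rightarrow> complex"
  assumes I: "card I = 4" and x: "\<forall>i\<in>I. cmod (x i) = 1" "(\<Sum>i\<in>I. x i) = -2"
    and c: "\<forall>i\<in>I. c i = 1 \<or> c i = x i" "(\<Sum>i\<in>I. c i) = 1"
  shows "\<forall>i\<in>I. x i = \<omega> \<or> x i = \<omega>^2"
proof -
  define T where "T = {i\<in>I. c i = 1}"
  define S where "S = I - T"
  have "finite I" using I by (metis card.infinite zero_neq_numeral)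
  then have fin: "finite I" "finite T" "finite S" "T \<subseteq> I" by (auto simp: T_def S_def)
  have I_split: "I = T \<union> S" "T \<inter> S = {}" by (auto simp: S_def T_def)
  have sum_split: "(\<Sum>i\<in>I. g i) = (\<Sum>i\<in>T. g i) + (\<Sum>i\<in>S. g i)" for g :: "'i \<Rightarrow> complex"
    using fin I_split sum.union_disjoint by metis
  have "(\<Sum>i\<in>S. c i) = (\<Sum>i\<in>S. x i)" using c(1) by (intro sum.cong) (auto simp: S_def T_def)
  then have "(\<Sum>i\<in>I. c i) = of_nat (card T) + (\<Sum>i\<in>S. x i)"
    by (simp add: sum_split T_def)
  then have xS: "(\<Sum>i\<in>S. x i) = of_real (1 - real (card T))"
    using c(2) by (simp add: eq_diff_eq add.commute)
  have xT: "(\<Sum>i\<in>T. x i) = of_real (real (card T) - 3)"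
    using x(2) xS sum_split[of x] by (simp add: algebra_simps eq_neg_iff_add_eq_0)
  have bound: "cmod (\<Sum>i\<in>P. x i) \<le> card P" if "P \<subseteq> I" for P
    using norm_sum[of x P] x(1) that by (simp add: subset_iff)
  have "card T \<le> 4" using card_mono[OF fin(1,4)] I by simp
  have card_S: "real (card S) = 4 - real (card T)"
    using card_Diff_subset[OF fin(2,4)] I \<open>card T \<le> 4\<close> by (simp add: S_def)
  have "\<bar>real (card T) - 3\<bar> \<le> card T"
    using bound[OF fin(4)] by (simp only: xT norm_of_real)
  moreover have "\<bar>1 - real (card T)\<bar> \<le> 4 - real (card T)"
  proof -
    have "S \<subseteq> I" by (simp add: S_def)
    then show ?thesis using bound[of S] by (simp only: xS norm_of_real card_S)
  qed
  ultimately have T2: "card T = 2" using \<open>card T \<le> 4\<close> by (simp add: abs_le_iff)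
  have S2: "card S = 2" using card_Diff_subset[OF fin(2,4)] I T2 by (simp add: S_def)
  have "(\<Sum>i\<in>T. x i) = -1" unfolding xT T2 by simp
  then have "\<forall>i\<in>T. x i = \<omega> \<or> x i = \<omega>^2"
    using unimodular_pair_minus_one[OF T2] x(1) fin(4) by blast
  moreover have "(\<Sum>i\<in>S. x i) = -1" unfolding xS T2 by simp
  then have "\<forall>i\<in>S. x i = \<omega> \<or> x i = \<omega>^2"
    using unimodular_pair_minus_one[OF S2] x(1) by (auto simp: S_def)
  ultimately show ?thesis using I_split(1) by blast
qed

section \<open>Matrices given by tables of exponents of \<open>\<omega>\<close>\<close>

definition phase_matrix :: "nat list list \<Rightarrow> complex^6^6" where
  "phase_matrix M = (\<chi> i j. \<omega> ^ (M ! idx6 i ! idx6 j))"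

lemma S6_0_phase_matrix: "S6_0 = phase_matrix S6_0_list"
  unfolding S6_0_def phase_matrix_def ..

lemma phase_matrix_permute:
  assumes f: "bij_betw f {..<6} {..<6}" and g: "bij_betw g {..<6} {..<6}"
    and N: "\<forall>p<6. \<forall>q<6. N ! p ! q = M ! f p ! g q"
  shows "monomial_equiv (phase_matrix M) (phase_matrix N)"
proof -
  have idx6_ind6_image: "idx6 (ind6 (h (idx6 i))) = h (idx6 i)" if "bij_betw h {..<6} {..<6}" for h i
    using idx6_ind6 bij_betwE[OF that] idx6_less by blast
  have "phase_matrix N = (\<chi> i j. phase_matrix M $ ind6 (f (idx6 i)) $ ind6 (g (idx6 j)))"
    using N idx6_less by (simp add: vec_eq_iff phase_matrix_def idx6_ind6_image[OF f] idx6_ind6_image[OF g])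
  then show ?thesis using monomial_equiv_permute[OF bij_lift6[OF f] bij_lift6[OF g]] by simp
qed

lemma count_list_conv_card: "count_list xs x = card {i. i < length xs \<and> xs ! i = x}"
proof -
  have "count_list xs x = length (filter (\<lambda>y. y = x) xs)" by (induction xs) auto
  then show ?thesis by (simp add: length_filter_conv_card)
qed

text \<open>Orthogonal rows \<open>\<omega>^r\<close>, \<open>\<omega>^s\<close> of a Hadamard matrix are balanced: the exponents of
  \<open>\<omega>^r \<omega>^{-s}\<close>, taken mod 3, take each residue twice (a vanishing sum of six cube roots
  of unity).\<close>

definition balanced :: "nat list \<Rightarrow> nat list \<Rightarrow> bool" where
  "balanced r s \<longleftrightarrow> (\<forall>k\<in>{0,1,2}. count_list (map2 (\<lambda>a b. (a + 2 * b) mod 3) r s) k = 2)"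

lemma orthogonal_rows_balanced:
  assumes H: "complex_hadamard (H::complex^6^6)" and "k \<noteq> l" and "length r = 6" "length s = 6"
    and r: "\<forall>j. H $ k $ j = \<omega> ^ (r ! idx6 j)" and s: "\<forall>j. H $ l $ j = \<omega> ^ (s ! idx6 j)"
  shows "balanced r s"
proof -
  define d where "d p = (r ! p + 2 * s ! p) mod 3" for p
  have "H $ k $ j * cnj (H $ l $ j) = \<omega> ^ d (idx6 j)" for j
  proof -
    have "cnj (\<omega> ^ n) = \<omega> ^ (2 * n)" for n by (simp add: cnj_omega power_mult)
    then show ?thesis using r s omega_pow_mod by (simp add: d_def power_add del: complex_cnj_power)
  qed
  then have "(\<Sum>p<6. \<omega> ^ d p) = 0"
    using hadamard_rows_orth[OF H, of k l] \<open>k \<noteq> l\<close> sum_idx6[of "\<lambda>p. \<omega> ^ d p"] by simp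
  moreover have "(\<omega> ^ n) ^ 3 = 1" for n by (metis omega_cube power_mult mult.commute power_one)
  ultimately have count: "3 * card {p\<in>{..<6}. \<omega> ^ d p = \<omega> ^ k} = 6" for k
    using cube_roots_sum_zero[of "{..<6}" "\<lambda>p. \<omega> ^ d p" "\<omega> ^ k"] by simp
  define diffs where "diffs = map2 (\<lambda>a b. (a + 2 * b) mod 3) r s"
  have "{p\<in>{..<6}. \<omega> ^ d p = \<omega> ^ k} = {i. i < length diffs \<and> diffs ! i = k}" if "k < 3" for k
    using omega_pow_inj[of "d _" k] that \<open>length r = 6\<close> \<open>length s = 6\<close>
    by (auto simp: d_def diffs_def)
  then have "card {i. i < length diffs \<and> diffs ! i = k} = 2" if "k < 3" for k
    using count[of k] that by simp
  then show ?thesis unfolding balanced_def count_list_conv_card diffs_def[symmetric] by auto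
qed

section \<open>The candidate rows\<close>

text \<open>In the normal form below (first row all ones, second row \<open>(1,1,\<omega>,\<omega>,\<omega>\<^sup>2,\<omega>\<^sup>2)\<close>) every
  further row turns out to be one of these eight rows of exponents.\<close>

definition candidate_rows :: "nat list list" where
  "candidate_rows = [[0,1,2,0,1,2], [0,1,2,0,2,1], [0,1,0,2,1,2], [0,1,0,2,2,1],
                     [0,2,2,1,1,0], [0,2,2,1,0,1], [0,2,1,2,1,0], [0,2,1,2,0,1]]"

lemma candidate_rows_length: "n < 8 \<Longrightarrow> length (candidate_rows ! n) = 6"
proof -
  have "\<forall>n\<in>{..<8}. length (candidate_rows ! n) = 6"
    by (simp add: lessThan_nat_numeral candidate_rows_def)
  then show "n < 8 \<Longrightarrow> length (candidate_rows ! n) = 6" by simp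
qed

lemma candidates_balanced:
  assumes "a < 8" "b < 8"
  shows "balanced (candidate_rows ! a) (candidate_rows ! b) \<longleftrightarrow>
         a \<noteq> b \<and> (a \<in> {0,3,5,6} \<longleftrightarrow> b \<in> {0,3,5,6})"
proof -
  have "\<forall>a\<in>{..<8}. \<forall>b\<in>{..<8}. balanced (candidate_rows ! a) (candidate_rows ! b) \<longleftrightarrow>
         a \<noteq> b \<and> (a \<in> {0,3,5,6} \<longleftrightarrow> b \<in> {0,3,5,6})"
    by (simp add: lessThan_nat_numeral candidate_rows_def balanced_def)
  then show ?thesis using assms by simp
qed

lemma four_candidates:
  assumes lt: "a < 8" "b < 8" "c < 8" "e < 8"
    and bal: "balanced (candidate_rows ! a) (candidate_rows ! b)"
      "balanced (candidate_rows ! a) (candidate_rows ! c)"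
      "balanced (candidate_rows ! a) (candidate_rows ! e)"
      "balanced (candidate_rows ! b) (candidate_rows ! c)"
      "balanced (candidate_rows ! b) (candidate_rows ! e)"
      "balanced (candidate_rows ! c) (candidate_rows ! e)"
  shows "mset [a, b, c, e] = mset [3, 6, 5, 0] \<or> mset [a, b, c, e] = mset [2, 7, 4, 1]"
proof -
  let ?A = "{0, 3, 5, 6} :: nat set" and ?B = "{1, 2, 4, 7} :: nat set"
  have classes: "x \<in> ?A \<or> x \<in> ?B" if "x < 8" for x using that by auto
  have same: "b \<in> ?A \<longleftrightarrow> a \<in> ?A" "c \<in> ?A \<longleftrightarrow> a \<in> ?A" "e \<in> ?A \<longleftrightarrow> a \<in> ?A"
    and dist: "distinct [a, b, c, e]"
    using bal candidates_balanced lt by auto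
  define C where "C = (if a \<in> ?A then ?A else ?B)"
  have "set [a, b, c, e] \<subseteq> C" using same classes lt by (auto simp: C_def)
  moreover have "card (set [a, b, c, e]) = card C" using distinct_card[OF dist] by (simp add: C_def)
  ultimately have "set [a, b, c, e] = C" by (intro card_subset_eq) (auto simp: C_def)
  then show ?thesis
    using set_eq_iff_mset_eq_distinct[OF dist, of "[3, 6, 5, 0]"]
      set_eq_iff_mset_eq_distinct[OF dist, of "[2, 7, 4, 1]"]
    by (auto simp: C_def insert_commute split: if_splits)
qed

section \<open>The two canonical matrices\<close>

definition canonical_table :: "nat list \<Rightarrow> nat list list" where
  "canonical_table ns = [0,0,0,0,0,0] # [0,0,1,1,2,2] # map ((!) candidate_rows) ns"

lemma canonical_table_reorder:
  assumes "mset ns = mset ns'" "length ns = 4"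
  shows "monomial_equiv (phase_matrix (canonical_table ns)) (phase_matrix (canonical_table ns'))"
proof -
  have "mset (canonical_table ns') = mset (canonical_table ns)"
    using assms(1) by (simp add: canonical_table_def)
  moreover have "length (canonical_table ns') = 6" "length (canonical_table ns) = 6"
    using assms mset_eq_length by (fastforce simp: canonical_table_def)+
  ultimately obtain f where f: "bij_betw f {..<6} {..<6}"
    and perm: "\<forall>i<6. canonical_table ns' ! i = canonical_table ns ! f i"
    using permutation_Ex_bij by metis
  show ?thesis by (rule phase_matrix_permute[OF f bij_betw_id]) (simp add: perm)
qed

lemma canonical_tables_S6_0:
  "monomial_equiv (phase_matrix (canonical_table [3, 6, 5, 0])) S6_0"
  "monomial_equiv (phase_matrix (canonical_table [2, 7, 4, 1])) S6_0"
proof -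
  have cols: "bij_betw ((!) t) {..<6} {..<6}" if "distinct t" "set t = {..<6}" "length t = 6"
    for t :: "nat list"
    using bij_betw_nth[OF that(1)] that(2,3) by simp
  have tab: "\<forall>p\<in>{..<6}. \<forall>q\<in>{..<6}.
          S6_0_list ! p ! q = canonical_table [3, 6, 5, 0] ! id p ! ([0, 1, 2, 5, 4, 3] ! q)"
       "\<forall>p\<in>{..<6}. \<forall>q\<in>{..<6}.
          S6_0_list ! p ! q = canonical_table [2, 7, 4, 1] ! id p ! ([0, 1, 2, 4, 5, 3] ! q)"
    by (simp_all add: lessThan_nat_numeral S6_0_list_def canonical_table_def candidate_rows_def)
  have col: "bij_betw ((!) [0, 1, 2, 5, 4, 3 :: nat]) {..<6} {..<6}"
    "bij_betw ((!) [0, 1, 2, 4, 5, 3 :: nat]) {..<6} {..<6}"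
    by (intro cols; simp add: lessThan_nat_numeral lessThan_Suc insert_commute)+
  show "monomial_equiv (phase_matrix (canonical_table [3, 6, 5, 0])) S6_0"
    unfolding S6_0_phase_matrix by (rule phase_matrix_permute[OF bij_betw_id col(1)]) (use tab(1) in simp)
  show "monomial_equiv (phase_matrix (canonical_table [2, 7, 4, 1])) S6_0"
    unfolding S6_0_phase_matrix by (rule phase_matrix_permute[OF bij_betw_id col(2)]) (use tab(2) in simp)
qed

lemma candidate_completion_S6_0:
  assumes "a < 8" "b < 8" "c < 8" "e < 8"
    and "balanced (candidate_rows ! a) (candidate_rows ! b)"
      "balanced (candidate_rows ! a) (candidate_rows ! c)"
      "balanced (candidate_rows ! a) (candidate_rows ! e)"
      "balanced (candidate_rows ! b) (candidate_rows ! c)"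
      "balanced (candidate_rows ! b) (candidate_rows ! e)"
      "balanced (candidate_rows ! c) (candidate_rows ! e)"
  shows "monomial_equiv (phase_matrix (canonical_table [a, b, c, e])) S6_0"
  using four_candidates[OF assms] canonical_table_reorder[of "[a, b, c, e]"]
    canonical_tables_S6_0 monomial_equiv_trans by fastforce

section \<open>The normal form with second row \<open>(1, 1, \<omega>, \<omega>, \<omega>\<^sup>2, \<omega>\<^sup>2)\<close>\<close>

definition S6_0_or_K6_3 :: "complex^6^6 \<Rightarrow> bool" where
  "S6_0_or_K6_3 H \<longleftrightarrow> monomial_equiv H S6_0 \<or>
     (\<exists>K. complex_hadamard K \<and> dephased K \<and> monomial_equiv H K \<and>
          (\<exists>i j. i \<noteq> 1 \<and> j \<noteq> 1 \<and> K $ i $ j = -1))"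

lemma S6_0_or_K6_3_equiv:
  assumes "monomial_equiv H H'" "S6_0_or_K6_3 H'" shows "S6_0_or_K6_3 H"
  using assms monomial_equiv_trans unfolding S6_0_or_K6_3_def by blast

text \<open>The index \<open>0\<close> of the type \<open>6\<close> plays the role of the sixth
  row and column.\<close>

locale normal_form =
  fixes H :: "complex^6^6"
  assumes hadamard: "complex_hadamard H" and dephased: "dephased H"
    and row2: "H$2$1 = 1" "H$2$2 = 1" "H$2$3 = \<omega>" "H$2$4 = \<omega>" "H$2$5 = \<omega>^2" "H$2$0 = \<omega>^2"
begin

lemma first_row_col: "H$1$j = 1" "H$i$1 = 1"
  using dephased unfolding dephased_def by blast+

text \<open>Orthogonality to the first two rows: with \<open>x = H$k$2\<close>, the pairs of entries in
  columns 3, 4 and in columns 5, 6 have sums \<open>\<omega>\<^sup>2(1 + x)\<close> and \<open>\<omega>(1 + x)\<close>; unless \<open>x = -1\<close>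
  these sums are nonzero and determine the pairs.\<close>

lemma row_structure:
  assumes k: "k \<noteq> 1" "k \<noteq> 2" and x: "H$k$2 \<noteq> -1"
  shows "(H$k$3 = \<omega>^2 \<and> H$k$4 = \<omega>^2 * H$k$2 \<or> H$k$3 = \<omega>^2 * H$k$2 \<and> H$k$4 = \<omega>^2) \<and>
         (H$k$5 = \<omega> \<and> H$k$0 = \<omega> * H$k$2 \<or> H$k$5 = \<omega> * H$k$2 \<and> H$k$0 = \<omega>)"
proof -
  define A where "A = 1 + H$k$2"
  define B where "B = H$k$3 + H$k$4"
  define C where "C = H$k$5 + H$k$0"
  have sum1: "A + B + C = 0"
    using hadamard_rows_orth[OF hadamard, of k 1] k
    by (simp add: sum_6 first_row_col A_def B_def C_def algebra_simps)
  have sum2: "A + \<omega>^2 * B + \<omega> * C = 0"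
    using hadamard_rows_orth[OF hadamard, of k 2] k
    by (simp add: sum_6 row2 first_row_col cnj_omega A_def B_def C_def algebra_simps
        del: complex_cnj_power)
  have "(1 - \<omega>) * (A - \<omega> * B) = (A + \<omega>^2 * B + \<omega> * C) - \<omega> * (A + B + C)"
    by (simp add: algebra_simps power2_eq_square)
  then have "A = \<omega> * B" using sum1 sum2 omega_neq by simp
  then have "\<omega>^2 * A = (\<omega> * \<omega>^2) * B" by (simp add: mult_ac)
  then have B: "B = \<omega>^2 * A" using omega_mult by simp
  have "C = -((1 + \<omega>^2) * A)" using sum1 B by (simp add: algebra_simps eq_neg_iff_add_eq_0)
  moreover have "1 + \<omega>^2 = -\<omega>" using omega_sum by (simp add: algebra_simps eq_neg_iff_add_eq_0)
  ultimately have C: "C = \<omega> * A" by simp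
  have "A \<noteq> 0" using x unfolding A_def by (metis add_eq_0_iff)
  then have nz: "H$k$3 + H$k$4 \<noteq> 0" "H$k$5 + H$k$0 \<noteq> 0"
    using B C cmod_omega unfolding B_def C_def by auto
  have sums: "H$k$3 + H$k$4 = \<omega>^2 + \<omega>^2 * H$k$2" "H$k$5 + H$k$0 = \<omega> + \<omega> * H$k$2"
    using B C unfolding A_def B_def C_def by (simp_all add: algebra_simps)
  have u: "cmod (H$i$j) = 1" for i j using hadamard_unimodular[OF hadamard] .
  have "cmod (\<omega>^2 * H$k$2) = 1" "cmod (\<omega> * H$k$2) = 1"
    using u cmod_omega by (simp_all add: norm_mult)
  then show ?thesis
    using unimodular_pair_eq[OF u u cmod_omega(2) _ sums(1) nz(1)]
      unimodular_pair_eq[OF u u cmod_omega(1) _ sums(2) nz(2)] by blast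
qed

text \<open>If no entry of the second column is \<open>-1\<close>, all its entries below the second row are
  primitive cube roots of unity: the sums of columns 2 and 3 are the two sums
  required by \<open>unimodular_split\<close>.\<close>

lemma second_column:
  assumes no_minus_one: "\<forall>k. H$k$2 \<noteq> -1"
  shows "\<forall>k\<in>{3,4,5,0}. H$k$2 = \<omega> \<or> H$k$2 = \<omega>^2"
proof (rule unimodular_split[where c = "\<lambda>k. \<omega> * H$k$3"])
  show "card {3, 4, 5, 0 :: 6} = 4" by simp
  show "\<forall>k\<in>{3,4,5,0}. cmod (H$k$2) = 1" using hadamard_unimodular[OF hadamard] by blast
  show "(\<Sum>k\<in>{3,4,5,0}. H$k$2) = -2"
    using hadamard_cols_orth[OF hadamard, of 2 1]
    by (simp add: sum_6 first_row_col row2 algebra_simps eq_neg_iff_add_eq_0)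
  show "\<forall>k\<in>{3,4,5,0}. \<omega> * H$k$3 = 1 \<or> \<omega> * H$k$3 = H$k$2"
  proof
    fix k :: 6 assume "k \<in> {3,4,5,0}"
    then have "k \<noteq> 1" "k \<noteq> 2" by auto
    then have "H$k$3 = \<omega>^2 \<or> H$k$3 = \<omega>^2 * H$k$2"
      using row_structure no_minus_one by blast
    then show "\<omega> * H$k$3 = 1 \<or> \<omega> * H$k$3 = H$k$2" using omega_mult by (auto simp: mult.assoc)
  qed
  have "(\<Sum>k\<in>{3,4,5,0}. H$k$3) = - 1 - \<omega>"
    using hadamard_cols_orth[OF hadamard, of 3 1]
    by (simp add: sum_6 first_row_col row2 algebra_simps eq_neg_iff_add_eq_0)
  moreover have "\<omega> * (- 1 - \<omega>) = 1" using omega_sum omega_mult by algebra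
  ultimately show "(\<Sum>k\<in>{3,4,5,0}. \<omega> * H$k$3) = 1" by (simp flip: sum_distrib_left)
qed

lemma row_is_candidate:
  assumes k: "k \<in> {3,4,5,0}" and no_minus_one: "\<forall>k. H$k$2 \<noteq> -1"
  shows "\<exists>n<8. \<forall>j. H$k$j = \<omega> ^ (candidate_rows ! n ! idx6 j)"
proof -
  have "k \<noteq> 1" "k \<noteq> 2" using k by auto
  note entries = row_structure[OF this no_minus_one[rule_format]]
  have "H$k$2 = \<omega> \<or> H$k$2 = \<omega>^2" using second_column[OF no_minus_one] k by blast
  then have "\<exists>n\<in>{..<8}. \<forall>j. H$k$j = \<omega> ^ (candidate_rows ! n ! idx6 j)"
    using entries by (elim conjE disjE) (simp_all add: lessThan_nat_numeral all_6 idx6_values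
        candidate_rows_def first_row_col omega_mult)
  then show ?thesis by auto
qed

theorem S6_0_or_K6_3: "S6_0_or_K6_3 H"
proof (cases "\<exists>k. H$k$2 = -1")
  case True
  then obtain k where "H$k$2 = -1" by blast
  moreover have "k \<noteq> 1" "(2::6) \<noteq> 1" using calculation first_row_col by force+
  ultimately show ?thesis
    unfolding S6_0_or_K6_3_def using hadamard dephased monomial_equiv_refl by blast
next
  case False
  then have no_minus_one: "\<forall>k. H$k$2 \<noteq> -1" by blast
  obtain n3 n4 n5 n0 where n: "n3 < 8" "n4 < 8" "n5 < 8" "n0 < 8"
    and rows: "\<forall>j. H$3$j = \<omega> ^ (candidate_rows ! n3 ! idx6 j)"
      "\<forall>j. H$4$j = \<omega> ^ (candidate_rows ! n4 ! idx6 j)"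
      "\<forall>j. H$5$j = \<omega> ^ (candidate_rows ! n5 ! idx6 j)"
      "\<forall>j. H$0$j = \<omega> ^ (candidate_rows ! n0 ! idx6 j)"
    using row_is_candidate[OF _ no_minus_one] by (metis insertCI)
  have bal: "balanced (candidate_rows ! a) (candidate_rows ! b)"
    if "a < 8" "b < 8" "k \<noteq> l" "\<forall>j. H$k$j = \<omega> ^ (candidate_rows ! a ! idx6 j)"
      "\<forall>j. H$l$j = \<omega> ^ (candidate_rows ! b ! idx6 j)" for a b k l
    using orthogonal_rows_balanced[OF hadamard that(3) candidate_rows_length[OF that(1)]
        candidate_rows_length[OF that(2)] that(4,5)] .
  have "H = phase_matrix (canonical_table [n3, n4, n5, n0])"
    using rows by (simp add: vec_eq_iff all_6 phase_matrix_def canonical_table_def idx6_values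
        first_row_col row2)
  moreover have "monomial_equiv (phase_matrix (canonical_table [n3, n4, n5, n0])) S6_0"
    using n rows by (intro candidate_completion_S6_0 bal) simp_all
  ultimately show ?thesis unfolding S6_0_or_K6_3_def by simp
qed

end

section \<open>Reduction to the normal form\<close>

lemma cube_root_row_counts:
  assumes H: "complex_hadamard (H::complex^6^6)" "dephased H" and i: "i \<noteq> 1"
    and roots: "\<forall>j. (H$i$j)^3 = 1" and "z^3 = 1"
  shows "card {j. H$i$j = z} = 2"
proof -
  have "(\<Sum>j\<in>UNIV. H$i$j) = 0"
    using hadamard_rows_orth[OF H(1), of i 1] i H(2) by (simp add: dephased_def)
  then have "3 * card {j\<in>UNIV. H$i$j = z} = card (UNIV :: 6 set)"
    using cube_roots_sum_zero[of UNIV "\<lambda>j. H$i$j" z] roots \<open>z^3 = 1\<close> by simp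
  then show ?thesis by simp
qed

lemma card_two_elements:
  assumes "card {x. P x} = 2"
  shows "\<exists>a b. a \<noteq> b \<and> P a \<and> P b \<and> (\<forall>x. P x \<longrightarrow> x = a \<or> x = b)"
proof -
  obtain a b where "{x. P x} = {a, b}" "a \<noteq> b" using assms by (meson card_2_iff)
  then show ?thesis by blast
qed

lemma index_permutation:
  fixes c p p' q q' :: 6
  assumes "distinct [1, c, p, p', q, q']"
  obtains \<tau> :: "6 \<Rightarrow> 6" where "bij \<tau>" "\<tau> 1 = 1" "\<tau> 2 = c" "\<tau> 3 = p" "\<tau> 4 = p'" "\<tau> 5 = q" "\<tau> 0 = q'"
proof -
  define \<tau> where "\<tau> j = (if j = 1 then 1 else if j = 2 then c else if j = 3 then p
                          else if j = 4 then p' else if j = 5 then q else q')" for j :: 6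
  have \<tau>_values: "\<tau> 1 = 1" "\<tau> 2 = c" "\<tau> 3 = p" "\<tau> 4 = p'" "\<tau> 5 = q" "\<tau> 0 = q'"
    unfolding \<tau>_def by simp_all
  have "\<forall>j j'. \<tau> j = \<tau> j' \<longrightarrow> j = j'"
    using assms unfolding all_6 \<tau>_values by auto
  then have "inj \<tau>" by (blast intro: injI)
  then have "bij \<tau>" by (simp add: bij_def finite_UNIV_inj_surj)
  then show ?thesis using that \<tau>_values by blast
qed

text \<open>Moving the row of cube roots to the second position and sorting its entries brings
  the matrix into the normal form.\<close>

lemma cube_root_row:
  assumes H: "complex_hadamard (H::complex^6^6)" "dephased H" and i: "i \<noteq> 1"
    and roots: "\<forall>j. (H$i$j)^3 = 1"
  shows "S6_0_or_K6_3 H"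
proof -
  have h1: "H$i$1 = 1" using H(2) unfolding dephased_def by simp
  have "(\<omega>^2)^3 = 1" by (metis omega_cube power_mult mult.commute power_one)
  then obtain p p' q q' where p: "p \<noteq> p'" "H$i$p = \<omega>" "H$i$p' = \<omega>"
    and q: "q \<noteq> q'" "H$i$q = \<omega>^2" "H$i$q' = \<omega>^2"
    using card_two_elements[OF cube_root_row_counts[OF H i roots]] omega_cube by meson
  obtain a b where "a \<noteq> b" "H$i$a = 1" "H$i$b = 1" "\<forall>x. H$i$x = 1 \<longrightarrow> x = a \<or> x = b"
    using card_two_elements[OF cube_root_row_counts[OF H i roots, of 1]] by auto
  then obtain c where c: "c \<noteq> 1" "H$i$c = 1" using h1 by metis
  have "distinct [1, c, p, p', q, q']" using c p q h1 omega_neq by auto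
  then obtain \<tau> :: "6 \<Rightarrow> 6" where \<tau>: "bij \<tau>" "\<tau> 1 = 1" "\<tau> 2 = c" "\<tau> 3 = p" "\<tau> 4 = p'" "\<tau> 5 = q" "\<tau> 0 = q'"
    by (rule index_permutation)
  define \<sigma> where "\<sigma> j = (if j = 2 then i else if j = i then 2 else j)" for j :: 6
  have \<sigma>: "bij \<sigma>" "\<sigma> 1 = 1" "\<sigma> 2 = i"
    using i by (auto simp: \<sigma>_def bij_def finite_UNIV_inj_surj inj_def split: if_splits)
  define H' where "H' = (\<chi> a b. H$(\<sigma> a)$(\<tau> b))"
  have "normal_form H'"
  proof
    show "complex_hadamard H'" unfolding H'_def by (rule hadamard_permute[OF H(1) \<sigma>(1) \<tau>(1)])
    show "dephased H'" using H(2) \<sigma>(2) \<tau>(2) unfolding H'_def dephased_def by simp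
  qed (simp_all add: H'_def \<sigma> \<tau> h1 c p q)
  then have "S6_0_or_K6_3 H'" by (rule normal_form.S6_0_or_K6_3)
  then show ?thesis
    using S6_0_or_K6_3_equiv monomial_equiv_permute[OF \<sigma>(1) \<tau>(1)] unfolding H'_def by blast
qed

lemma S6_0_symmetric: "transpose S6_0 = S6_0"
proof -
  have "\<forall>i j. S6_0_list ! idx6 i ! idx6 j = S6_0_list ! idx6 j ! idx6 i"
    unfolding all_6 by (simp add: idx6_values S6_0_list_def)
  then show ?thesis by (simp add: vec_eq_iff transpose_def S6_0_def)
qed

lemma S6_0_or_K6_3_transpose:
  assumes "S6_0_or_K6_3 (transpose H)" shows "S6_0_or_K6_3 H"
proof -
  have transposed: "monomial_equiv H (transpose K)" if "monomial_equiv (transpose H) K" for K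
    using monomial_equiv_transpose[OF that] by simp
  have "monomial_equiv H S6_0" if "monomial_equiv (transpose H) S6_0"
    using transposed[OF that] S6_0_symmetric by simp
  moreover have "\<exists>K. complex_hadamard K \<and> dephased K \<and> monomial_equiv H K \<and>
                     (\<exists>i j. i \<noteq> 1 \<and> j \<noteq> 1 \<and> K $ i $ j = -1)"
    if "complex_hadamard K" "dephased K" "monomial_equiv (transpose H) K"
      "i \<noteq> 1" "j \<noteq> 1" "K $ i $ j = -1" for K i j
    using that hadamard_transpose dephased_transpose transposed
    by (intro exI[of _ "transpose K"]) (auto simp: transpose_def)
  ultimately show ?thesis using assms unfolding S6_0_or_K6_3_def by blast
qed

theorem lemma2p25:
  fixes H :: "complex^6^6"
  assumes "complex_hadamard H" and "dephased H"
    and "(\<exists>i. i \<noteq> 1 \<and> (\<forall>j. (H $ i $ j) ^ 3 = 1)) \<or> (\<exists>j. j \<noteq> 1 \<and> (\<forall>i. (H $ i $ j) ^ 3 = 1))"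
  shows "hadamard_equiv H S6_0 \<or> in_K6_3 H"
proof -
  have "S6_0_or_K6_3 H"
    using assms(3)
  proof
    assume "\<exists>i. i \<noteq> 1 \<and> (\<forall>j. (H $ i $ j) ^ 3 = 1)"
    then show ?thesis using cube_root_row[OF assms(1,2)] by blast
  next
    assume "\<exists>j. j \<noteq> 1 \<and> (\<forall>i. (H $ i $ j) ^ 3 = 1)"
    then obtain j where "j \<noteq> 1" "\<forall>i. (transpose H $ j $ i) ^ 3 = 1"
      by (auto simp: transpose_def)
    then have "S6_0_or_K6_3 (transpose H)"
      using cube_root_row[OF hadamard_transpose[OF assms(1)] dephased_transpose[OF assms(2)]]
      by blast
    then show ?thesis by (rule S6_0_or_K6_3_transpose)
  qed
  then show ?thesis
    unfolding S6_0_or_K6_3_def in_K6_3_def using monomial_equiv_imp_hadamard_equiv by blast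
qed

end
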